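(* Under Strategy 2A (described in the context), let $U_h(\omega)$ be the number of uncles created during the attack cycle $\omega$ that are referred by nephew blocks mined by the honest miners, in $\omega$ or in a later cycle. Then $$\mathbb{E}[U_h]=p^2q+\bigl(p+(1-\gamma)p^2q\bigr)pq^2\cdot\frac{1-(pq)^{n_1-1}}{1-pq}.$$
   Context: Honest hashrate $p$, attacker hashrate $q$, $p+q=1$, $0<q<p$; $\gamma\in[0,1]$ is the fraction of honest hashrate mining on the attacker's block during a public competition between equal-height blocks. Attack cycles are i.i.d. words in S (attacker block) and H (honest block): H, SHS, SHH, or SSwH with $w$ a Dyck word; $\mathbb{P}[H]=p$, $\mathbb{P}[SHS]=pq^2$, $\mathbb{P}[SHH]=p^2q$, $\mathbb{P}[SSwH]=q^2p(pq)^{|w|}$ ($|w|$ half the length of $w$). In SHH the second honest block is built on the attacker's block with probability $\gamma$ and on the first honest block with probability $1-\gamma$. Ethereum rules: an uncle is a non-official block whose parent is official; a nephew (official block) may refer an uncle at distance (height difference) at most $n_1$ ($n_1\ge2$ an integer). Strategy 2A ("brutal fork"): the attacker keeps his whole fork secret and releases it all at once at the end of the attack cycle, when an honest block would reduce his advance to one block (after a single attacker block, he publishes it to compete with the honest block); the attacker's fork wins in cycles starting with SS; all miners refer all possible uncles. *)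

theory Defs
  imports "HOL-Probability.Probability"
begin

text \<open>Blocks: S = attacker block, H = honest block.\<close>
datatype letter = S | H

text \<open>An attack cycle: the word of blocks in mining order, together with a Boolean which
  is only meaningful for the cycle SHH: True iff the second honest block is built on the
  attacker's block (probability gamma), False iff built on the first honest block.\<close>
type_synonym cycle = "letter list \<times> bool"

definition dyck :: "letter list \<Rightarrow> bool" where
  "dyck v \<longleftrightarrow> length (filter (\<lambda>x. x = S) v) = length (filter (\<lambda>x. x = H) v) \<and>
     (\<forall>k \<le> length v. length (filter (\<lambda>x. x = H) (take k v)) \<le> length (filter (\<lambda>x. x = S) (take k v)))"

text \<open>Probability of a cycle (q is the attacker hashrate, p the honest one).\<close>
definition cycle_prob :: "real \<Rightarrow> real \<Rightarrow> real \<Rightarrow> cycle \<Rightarrow> real" where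
  "cycle_prob p q \<gamma> c =
     (if c = ([H], False) then p
      else if c = ([S,H,S], False) then p * q^2
      else if c = ([S,H,H], True) then p^2 * q * \<gamma>
      else if c = ([S,H,H], False) then p^2 * q * (1 - \<gamma>)
      else if (\<exists>v. dyck v \<and> fst c = [S,S] @ v @ [H]) \<and> \<not> snd c
        then q^2 * p * (p*q) ^ ((length (fst c) - 3) div 2)
      else 0)"

definition cycle_pmf :: "real \<Rightarrow> real \<Rightarrow> real \<Rightarrow> cycle pmf" where
  "cycle_pmf p q \<gamma> = embed_pmf (cycle_prob p q \<gamma>)"

text \<open>Structure of the blocks of one cycle (Strategy 2A).  Block j of the cycle is the
  j-th mined block.  Its height relative to the official tip at the start of the cycle.\<close>
definition rel_height :: "cycle \<Rightarrow> nat \<Rightarrow> nat" where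
  "rel_height c j = length (filter (\<lambda>x. x = fst c ! j) (take (Suc j) (fst c)))"

definition official_in :: "cycle \<Rightarrow> nat \<Rightarrow> bool" where
  "official_in c j =
     (if fst c = [H] then True
      else if fst c = [S,H,S] then j \<noteq> 1
      else if fst c = [S,H,H] then (if snd c then j \<noteq> 1 else j \<noteq> 0)
      else fst c ! j = S)"

text \<open>Parent of block j: None = the official tip at the start of the cycle,
  Some j' = block j' of the same cycle.\<close>
definition parent_in :: "cycle \<Rightarrow> nat \<Rightarrow> nat option" where
  "parent_in c j =
     (if rel_height c j = 1 then None
      else if fst c = [S,H,H] \<and> snd c \<and> j = 2 then Some 0
      else Some (GREATEST j'. j' < j \<and> fst c ! j' = fst c ! j))"

definition advance :: "cycle \<Rightarrow> nat" where
  "advance c = card {j. j < length (fst c) \<and> official_in c j}"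

text \<open>Blocks of a stream of cycles: (i, j) = j-th block of the i-th cycle.\<close>
type_synonym block = "nat \<times> nat"

definition is_block :: "cycle stream \<Rightarrow> block \<Rightarrow> bool" where
  "is_block s b \<longleftrightarrow> snd b < length (fst (s !! fst b))"

definition miner :: "cycle stream \<Rightarrow> block \<Rightarrow> letter" where
  "miner s b = fst (s !! fst b) ! snd b"

definition height :: "cycle stream \<Rightarrow> block \<Rightarrow> nat" where
  "height s b = (\<Sum>k < fst b. advance (s !! k)) + rel_height (s !! fst b) (snd b)"

definition official :: "cycle stream \<Rightarrow> block \<Rightarrow> bool" where
  "official s b \<longleftrightarrow> is_block s b \<and> official_in (s !! fst b) (snd b)"

definition mined_before :: "block \<Rightarrow> block \<Rightarrow> bool" where
  "mined_before b b' \<longleftrightarrow> fst b < fst b' \<or> (fst b = fst b' \<and> snd b < snd b')"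

definition is_uncle :: "cycle stream \<Rightarrow> block \<Rightarrow> bool" where
  "is_uncle s b \<longleftrightarrow> is_block s b \<and> \<not> official s b \<and>
     (case parent_in (s !! fst b) (snd b) of None \<Rightarrow> True
        | Some j' \<Rightarrow> official s (fst b, j'))"

definition can_refer :: "nat \<Rightarrow> cycle stream \<Rightarrow> block \<Rightarrow> block \<Rightarrow> bool" where
  "can_refer n1 s n u \<longleftrightarrow> official s n \<and> is_uncle s u \<and> mined_before u n \<and>
     height s u < height s n \<and> height s n \<le> height s u + n1"

text \<open>All miners refer all possible uncles, so an uncle is referred by the first (lowest)
  official block able to refer it.\<close>
definition referred_by_honest :: "nat \<Rightarrow> cycle stream \<Rightarrow> block \<Rightarrow> bool" where
  "referred_by_honest n1 s u \<longleftrightarrow>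
     (\<exists>n. can_refer n1 s n u \<and> miner s n = H \<and>
          (\<forall>n'. can_refer n1 s n' u \<longrightarrow> height s n \<le> height s n'))"

definition Uh :: "nat \<Rightarrow> cycle stream \<Rightarrow> nat" where
  "Uh n1 s = card {j. is_uncle s (0, j) \<and> referred_by_honest n1 s (0, j)}"

end

theory Submission
  imports Defs
begin

(* An uncle created in the first cycle exists only in SHH, SHS and the fork cycles SS w H, where
   it is the first honest block, at height 1.  In SHH it is referred by the honest third block, in
   SHS by the attacker's second block.  In a fork cycle with a leading attacker blocks, an attacker
   block mined after the uncle has height a + 1 and refers it before any honest block can; if there
   is no such block, the cycle is S^a H^(a-1), it advances the chain by a, and the uncle is referred
   by the lowest official block of the next cycle, at distance a, which is honest exactly when that
   cycle is H or SHH with the second honest block built on the first.  Hence almost surely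
     U_h = 1[c0 = SHH] + 1[c0 = S^(k+2) H^(k+1), k < n1 - 1] * 1[c1 in {H, SHH}],
   and independence of the cycles gives the expectation.  The cycle probabilities sum to 1
   because the Dyck words weighted by (pq)^|w| sum to 1/p, the smaller root of D = 1 + pq D^2. *)

section \<open>Dyck words\<close>

lemma length_filter_eq_count_list: "length (filter (\<lambda>x. x = a) xs) = count_list xs a"
  by (induction xs) auto

lemma letter_neq_S_iff [simp]: "x \<noteq> S \<longleftrightarrow> x = H"
  by (cases x) auto

lemma count_list_replicate [simp]: "count_list (replicate n x) y = (if x = y then n else 0)"
  by (induction n) auto

lemma length_eq_count_list_S_H: "length xs = count_list xs S + count_list xs H"
  by (induction xs) auto

lemma dyck_iff_count_list:
  "dyck v \<longleftrightarrow> count_list v S = count_list v H \<and>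
     (\<forall>k \<le> length v. count_list (take k v) H \<le> count_list (take k v) S)"
  unfolding dyck_def length_filter_eq_count_list ..

lemma dyck_Nil [simp]: "dyck []"
  by (simp add: dyck_iff_count_list)

lemma length_dyck: "dyck v \<Longrightarrow> length v = 2 * count_list v S"
  by (simp add: dyck_iff_count_list length_eq_count_list_S_H)

lemma dyck_replicate: "dyck (replicate k S @ replicate k H)"
  by (auto simp: dyck_iff_count_list take_append min_def)

lemma dyck_first_return:
  assumes u: "dyck u" and v: "dyck v"
  shows "dyck (S # u @ H # v)"
  unfolding dyck_iff_count_list
proof (intro conjI allI impI)
  show "count_list (S # u @ H # v) S = count_list (S # u @ H # v) H"
    using u v by (simp add: dyck_iff_count_list)
next
  fix k assume k: "k \<le> length (S # u @ H # v)"
  consider (zero) "k = 0" | (short) i where "k = Suc i" "i \<le> length u"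
    | (long) i where "k = Suc (Suc (length u + i))" "i \<le> length v"
  proof -
    have "k = 0 \<or> (k = Suc (k - 1) \<and> k - 1 \<le> length u) \<or>
        (k = Suc (Suc (length u + (k - Suc (Suc (length u))))) \<and> k - Suc (Suc (length u)) \<le> length v)"
      using k by auto
    then show thesis using that by blast
  qed
  then show "count_list (take k (S # u @ H # v)) H \<le> count_list (take k (S # u @ H # v)) S"
  proof cases
    case short
    then have "count_list (take i u) H \<le> count_list (take i u) S"
      using u by (simp add: dyck_iff_count_list)
    then show ?thesis using short by simp
  next
    case long
    then have "count_list (take i v) H \<le> count_list (take i v) S"
      using v by (simp add: dyck_iff_count_list)
    then show ?thesis using long u by (simp add: dyck_iff_count_list)
  qed simp
qed

lemma not_dyck_append_H:
  assumes "dyck u" shows "\<not> dyck (u @ H # w)"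
proof
  assume "dyck (u @ H # w)"
  moreover have "Suc (length u) \<le> length (u @ H # w)" by simp
  ultimately have "count_list (take (Suc (length u)) (u @ H # w)) H
      \<le> count_list (take (Suc (length u)) (u @ H # w)) S"
    unfolding dyck_iff_count_list by blast
  then show False using assms by (simp add: dyck_iff_count_list)
qed

lemma dyck_first_return_inj:
  assumes "dyck u" "dyck u'" "S # u @ H # v = S # u' @ H # v'"
  shows "u = u' \<and> v = v'"
proof -
  from assms(3) obtain w where "u = u' @ w \<and> w @ H # v = H # v' \<or> u @ w = u' \<and> H # v = w @ H # v'"
    by (auto simp: append_eq_append_conv2)
  then show ?thesis
  proof
    assume "u = u' @ w \<and> w @ H # v = H # v'"
    then show ?thesis
      using not_dyck_append_H[OF assms(2)] assms(1) by (cases w) auto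
  next
    assume "u @ w = u' \<and> H # v = w @ H # v'"
    then show ?thesis
      using not_dyck_append_H[OF assms(1)] assms(2) by (cases w) auto
  qed
qed

lemma dyck_first_return_decomp:
  assumes w: "dyck w" "w \<noteq> []"
  obtains u v where "w = S # u @ H # v" "dyck u" "dyck v"
proof -
  define bal where "bal j \<longleftrightarrow> count_list (take j w) S = count_list (take j w) H" for j
  have prefix: "count_list (take j w) H \<le> count_list (take j w) S" if "j \<le> length w" for j
    using w(1) that by (simp add: dyck_iff_count_list)
  define k where "k = (LEAST k. 0 < k \<and> bal k)"
  have "0 < length w \<and> bal (length w)"
    using w by (simp add: bal_def dyck_iff_count_list)
  then have k: "0 < k" "bal k" "k \<le> length w"
    unfolding k_def by (metis (mono_tags, lifting) LeastI Least_le)+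
  have strict: "count_list (take j w) H < count_list (take j w) S" if "0 < j" "j < k" for j
    using prefix[of j] not_less_Least[of j "\<lambda>k. 0 < k \<and> bal k"] that k(3)
    by (auto simp: k_def bal_def)
  obtain x w' where xw: "w = x # w'" using w(2) by (cases w) auto
  have "x = S" using prefix[of 1] xw by (cases x) auto
  have "k \<noteq> 1" using k(2) xw \<open>x = S\<close> by (auto simp: bal_def)
  then obtain m where m: "k = Suc (Suc m)"
    using k(1) by (metis One_nat_def not0_implies_Suc zero_less_iff_neq_zero)
  define u where "u = take m w'"
  define v where "v = drop (Suc m) w'"
  have "m < length w'" using k(3) m xw by simp
  then have w_split: "w = S # u @ w' ! m # v"
    using xw \<open>x = S\<close> by (simp add: u_def v_def id_take_nth_drop[symmetric])
  have len_u: "length u = m" using \<open>m < length w'\<close> by (simp add: u_def)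
  have u_le: "count_list u H \<le> count_list u S"
    using strict[of "Suc m"] m w_split len_u by simp
  have "w' ! m = H \<and> count_list u S = count_list u H"
    using k(2) m w_split len_u u_le by (cases "w' ! m") (auto simp: bal_def)
  then have w_eq: "w = S # u @ H # v" and u_bal: "count_list u S = count_list u H"
    using w_split by auto
  have "dyck u"
    unfolding dyck_iff_count_list
  proof (intro conjI allI impI u_bal)
    fix j assume "j \<le> length u"
    then show "count_list (take j u) H \<le> count_list (take j u) S"
      using strict[of "Suc j"] m len_u w_eq by simp
  qed
  moreover have "dyck v"
    unfolding dyck_iff_count_list
  proof (intro conjI allI impI)
    show "count_list v S = count_list v H"
      using w(1) w_eq u_bal by (simp add: dyck_iff_count_list)
  next
    fix j assume "j \<le> length v"
    then show "count_list (take j v) H \<le> count_list (take j v) S"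
      using prefix[of "Suc (Suc (length u + j))"] w_eq u_bal by simp
  qed
  ultimately show thesis using that w_eq by blast
qed

definition dyck_upto :: "nat \<Rightarrow> letter list set" where
  "dyck_upto N = {v. dyck v \<and> length v \<le> 2 * N}"

lemma finite_dyck_upto: "finite (dyck_upto N)"
proof (rule finite_subset)
  show "dyck_upto N \<subseteq> {xs. set xs \<subseteq> UNIV \<and> length xs \<le> 2 * N}"
    by (auto simp: dyck_upto_def)
  have "finite (UNIV :: letter set)"
    by (rule finite_subset[of _ "{S, H}"]) (use letter.exhaust in auto)
  then show "finite {xs. set xs \<subseteq> (UNIV :: letter set) \<and> length xs \<le> 2 * N}"
    by (rule finite_lists_length_le)
qed

lemma inj_on_first_return: "inj_on (\<lambda>(u, v). S # u @ H # v) ({u. dyck u} \<times> UNIV)"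
  by (auto simp: inj_on_def dest: dyck_first_return_inj)

lemma dyck_upto_Suc_subset:
  "dyck_upto (Suc N) \<subseteq> insert [] ((\<lambda>(u, v). S # u @ H # v) ` (dyck_upto N \<times> dyck_upto N))"
proof
  fix w assume w: "w \<in> dyck_upto (Suc N)"
  show "w \<in> insert [] ((\<lambda>(u, v). S # u @ H # v) ` (dyck_upto N \<times> dyck_upto N))"
  proof (cases "w = []")
    case False
    with w obtain u v where "w = S # u @ H # v" "dyck u" "dyck v"
      by (auto simp: dyck_upto_def elim: dyck_first_return_decomp)
    with w show ?thesis by (force simp: dyck_upto_def)
  qed simp
qed

text \<open>The truncated generating functions stay below the smaller fixed point \<open>1/p\<close> of
  \<open>D = 1 + p q D\<^sup>2\<close>, because \<open>D \<mapsto> 1 + p q D\<^sup>2\<close> maps \<open>[0, 1/p]\<close> into itself.\<close>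
lemma sum_dyck_upto_le:
  fixes p q :: real
  assumes p: "0 < p" and q: "0 < q" and pq: "p + q = 1"
  shows "(\<Sum>v\<in>dyck_upto N. (p * q) ^ (length v div 2)) \<le> 1 / p"
proof (induction N)
  case 0
  have "dyck_upto 0 = {[]}" by (auto simp: dyck_upto_def)
  then show ?case using p pq q by (simp add: field_simps)
next
  case (Suc N)
  let ?w = "\<lambda>v. (p * q) ^ (length v div 2)"
  let ?s = "\<Sum>v\<in>dyck_upto N. ?w v"
  have "(\<Sum>v\<in>dyck_upto (Suc N). ?w v)
      \<le> (\<Sum>v\<in>insert [] ((\<lambda>(u, v). S # u @ H # v) ` (dyck_upto N \<times> dyck_upto N)). ?w v)"
    using p q finite_dyck_upto by (intro sum_mono2 dyck_upto_Suc_subset) auto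
  also have "\<dots> = 1 + (\<Sum>v\<in>(\<lambda>(u, v). S # u @ H # v) ` (dyck_upto N \<times> dyck_upto N). ?w v)"
    using finite_dyck_upto by (subst sum.insert) auto
  also have "(\<Sum>v\<in>(\<lambda>(u, v). S # u @ H # v) ` (dyck_upto N \<times> dyck_upto N). ?w v)
      = (\<Sum>(u, v)\<in>dyck_upto N \<times> dyck_upto N. ?w (S # u @ H # v))"
    by (rule sum.reindex_cong[where l = "\<lambda>(u, v). S # u @ H # v"])
       (auto intro: inj_on_subset[OF inj_on_first_return] simp: dyck_upto_def)
  also have "\<dots> = (\<Sum>(u, v)\<in>dyck_upto N \<times> dyck_upto N. p * q * (?w u * ?w v))"
    by (rule sum.cong) (auto simp: dyck_upto_def power_add dest!: length_dyck)
  also have "\<dots> = p * q * (\<Sum>(u, v)\<in>dyck_upto N \<times> dyck_upto N. ?w u * ?w v)"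
    by (simp add: sum_distrib_left split_def)
  also have "(\<Sum>(u, v)\<in>dyck_upto N \<times> dyck_upto N. ?w u * ?w v) = ?s * ?s"
    by (simp only: sum_product sum.cartesian_product)
  also have "1 + p * q * (?s * ?s) \<le> 1 + p * q * (1 / p * (1 / p))"
    using Suc.IH p q by (intro add_left_mono mult_left_mono mult_mono sum_nonneg) auto
  also have "\<dots> = 1 / p" using p pq by (simp add: field_simps)
  finally show ?case .
qed

lemma nn_integral_dyck_le:
  fixes p q :: real
  assumes p: "0 < p" and q: "0 < q" and pq: "p + q = 1"
  shows "(\<integral>\<^sup>+ v. ennreal ((p * q) ^ (length v div 2)) \<partial>count_space {v. dyck v}) \<le> ennreal (1 / p)"
proof -
  let ?w = "\<lambda>v. ennreal ((p * q) ^ (length v div 2))"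
  have sup: "?w v * indicator {v. dyck v} v = (SUP N. ?w v * indicator (dyck_upto N) v)" for v
  proof (cases "dyck v")
    case True
    then have "?w v * indicator (dyck_upto N) v \<le> ?w v * indicator (dyck_upto (length v)) v" for N
      by (simp add: dyck_upto_def indicator_def)
    then show ?thesis using True
      by (intro antisym SUP_upper2[of "length v"]) (auto simp: dyck_upto_def intro: SUP_least)
  qed (simp add: dyck_upto_def)
  have "incseq (\<lambda>N v. ?w v * indicator (dyck_upto N) v)"
    by (intro monoI le_funI mult_left_mono) (auto simp: indicator_def dyck_upto_def)
  then have "(\<integral>\<^sup>+ v. ?w v \<partial>count_space {v. dyck v})
      = (SUP N. \<integral>\<^sup>+ v. ?w v * indicator (dyck_upto N) v \<partial>count_space UNIV)"
    by (simp add: nn_integral_count_space_indicator sup nn_integral_monotone_convergence_SUP)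
  also have "\<dots> = (SUP N. ennreal (\<Sum>v\<in>dyck_upto N. (p * q) ^ (length v div 2)))"
    using p q finite_dyck_upto
    by (simp add: nn_integral_count_space_indicator[symmetric] nn_integral_count_space_finite sum_ennreal)
  also have "\<dots> \<le> ennreal (1 / p)"
    using sum_dyck_upto_le[OF p q pq] by (intro SUP_least ennreal_leI)
  finally show ?thesis .
qed

lemma nn_integral_dyck_fixpoint:
  fixes x :: real
  assumes "0 \<le> x"
  defines "D \<equiv> \<integral>\<^sup>+ v. ennreal (x ^ (length v div 2)) \<partial>count_space {v. dyck v}"
  shows "D = 1 + ennreal x * (D * D)"
proof -
  define w where "w v = ennreal (x ^ (length v div 2)) * indicator {v. dyck v} v" for v
  have D_w: "D = (\<integral>\<^sup>+ v. w v \<partial>count_space UNIV)"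
    unfolding D_def w_def by (rule nn_integral_count_space_indicator) simp
  let ?join = "\<lambda>(u, v). S # u @ H # v"
  let ?G = "?join ` ({v. dyck v} \<times> {v. dyck v})"
  have w_split: "w v = w v * indicator {[]} v + w v * indicator ?G v" for v
  proof (cases "v = [] \<or> \<not> dyck v")
    case True
    then show ?thesis by (auto simp: w_def indicator_def dest: dyck_first_return)
  next
    case False
    then obtain u v' where "v = S # u @ H # v'" "dyck u" "dyck v'"
      by (metis dyck_first_return_decomp)
    then have "v \<in> ?G" by force
    then show ?thesis using False by (simp add: indicator_def)
  qed
  have w_zero: "\<not> dyck v \<Longrightarrow> w v = 0" for v
    by (simp add: w_def)
  have join_w: "w (S # u @ H # v) = ennreal x * (w u * w v)" if "dyck u" "dyck v" for u v
    using assms that dyck_first_return[OF that] length_dyck[OF that(1)] length_dyck[OF that(2)]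
    by (simp add: w_def power_add ennreal_mult)
  have "D = (\<integral>\<^sup>+ v. w v * indicator {[]} v + w v * indicator ?G v \<partial>count_space UNIV)"
    unfolding D_w by (rule nn_integral_cong) (rule w_split)
  also have "\<dots> = 1 + (\<integral>\<^sup>+ v. w v \<partial>count_space ?G)"
    by (simp add: nn_integral_add nn_integral_count_space_indicator w_def)
  also have "(\<integral>\<^sup>+ v. w v \<partial>count_space ?G)
      = (\<integral>\<^sup>+ uv. w (?join uv) \<partial>count_space ({v. dyck v} \<times> {v. dyck v}))"
    by (intro nn_integral_bij_count_space[symmetric] inj_on_imp_bij_betw
        inj_on_subset[OF inj_on_first_return]) auto
  also have "\<dots> = (\<integral>\<^sup>+ (u, v). ennreal x * (w u * w v) \<partial>count_space UNIV)"
    by (subst nn_integral_count_space_indicator)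
       (auto intro!: nn_integral_cong split: split_indicator simp: join_w w_zero)
  also have "\<dots> = ennreal x * (\<integral>\<^sup>+ u. \<integral>\<^sup>+ v. w u * w v \<partial>count_space UNIV \<partial>count_space UNIV)"
    by (simp add: nn_integral_cmult nn_integral_fst_count_space[symmetric] split_def)
  also have "\<dots> = ennreal x * (D * D)"
    by (simp add: D_w nn_integral_cmult nn_integral_multc)
  finally show ?thesis .
qed

lemma nn_integral_dyck:
  fixes p q :: real
  assumes q: "0 < q" and qp: "q < p" and pq: "p + q = 1"
  shows "(\<integral>\<^sup>+ v. ennreal ((p * q) ^ (length v div 2)) \<partial>count_space {v. dyck v}) = ennreal (1 / p)"
    (is "?D = _")
proof -
  have p: "0 < p" using q qp by simp
  have "?D < \<top>"
    using nn_integral_dyck_le[OF p q pq] by (simp add: le_less_trans)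
  then obtain d where d: "?D = ennreal d" "0 \<le> d"
    by (auto simp: less_top_ennreal)
  have "d \<le> 1 / p"
    using nn_integral_dyck_le[OF p q pq] d p by (simp add: ennreal_le_iff)
  have "ennreal d = ennreal (1 + p * q * (d * d))"
    using nn_integral_dyck_fixpoint[of "p * q"] d p q
    by (simp add: ennreal_mult ennreal_plus)
  then have "d = 1 + p * q * (d * d)" using d p q by (subst (asm) ennreal_inj) auto
  moreover have "d = d * p + d * q" using pq by (metis distrib_left mult.right_neutral)
  ultimately have roots: "(p * d - 1) * (q * d - 1) = 0" by (simp add: algebra_simps)
  have "1 / p < 1 / q"
    using q qp by (simp add: frac_less2)
  then have "d < 1 / q" using \<open>d \<le> 1 / p\<close> by simp
  then have "q * d - 1 \<noteq> 0" using q by (simp add: field_simps)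
  then have "p * d - 1 = 0" using roots by simp
  then have "d = 1 / p" using p by (simp add: field_simps)
  then show ?thesis using d by simp
qed

section \<open>The distribution of a cycle\<close>

definition fork_cycle :: "letter list \<Rightarrow> cycle" where
  "fork_cycle v = ([S, S] @ v @ [H], False)"

definition short_cycles :: "cycle set" where
  "short_cycles = {([H], False), ([S, H, S], False), ([S, H, H], True), ([S, H, H], False)}"

definition cycle_support :: "cycle set" where
  "cycle_support = short_cycles \<union> fork_cycle ` {v. dyck v}"

lemma cycle_prob_fork_cycle:
  "dyck v \<Longrightarrow> cycle_prob p q \<gamma> (fork_cycle v) = q\<^sup>2 * p * (p * q) ^ (length v div 2)"
  by (auto simp: cycle_prob_def fork_cycle_def)

lemma cycle_prob_outside_support: "c \<notin> cycle_support \<Longrightarrow> cycle_prob p q \<gamma> c = 0"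
  by (cases c) (auto simp: cycle_prob_def cycle_support_def short_cycles_def fork_cycle_def image_iff)

lemma cycle_prob_nonneg:
  fixes p q \<gamma> :: real
  assumes "0 < q" "q < p" "0 \<le> \<gamma>" "\<gamma> \<le> 1"
  shows "0 \<le> cycle_prob p q \<gamma> c"
  using assms by (auto simp: cycle_prob_def)

lemma nn_integral_cycle_prob:
  fixes p q \<gamma> :: real
  assumes q: "0 < q" and qp: "q < p" and pq: "p + q = 1" and "0 \<le> \<gamma>" "\<gamma> \<le> 1"
  shows "(\<integral>\<^sup>+ c. ennreal (cycle_prob p q \<gamma> c) \<partial>count_space UNIV) = 1"
proof -
  let ?f = "\<lambda>c. ennreal (cycle_prob p q \<gamma> c)"
  have p: "0 < p" using q qp by simp
  have disjoint: "short_cycles \<inter> fork_cycle ` {v. dyck v} = {}"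
    by (auto simp: short_cycles_def fork_cycle_def)
  have "(\<integral>\<^sup>+ c. ?f c \<partial>count_space UNIV) = (\<integral>\<^sup>+ c \<in> cycle_support. ?f c \<partial>count_space UNIV)"
    by (intro nn_integral_cong) (auto simp: cycle_prob_outside_support split: split_indicator)
  also have "\<dots> = (\<integral>\<^sup>+ c. ?f c \<partial>count_space short_cycles)
      + (\<integral>\<^sup>+ c. ?f c \<partial>count_space (fork_cycle ` {v. dyck v}))"
    unfolding cycle_support_def
    by (simp add: nn_integral_disjoint_pair_countspace[OF disjoint] nn_integral_count_space_indicator)
  also have "(\<integral>\<^sup>+ c. ?f c \<partial>count_space short_cycles) = ennreal (p + p * q\<^sup>2 + p\<^sup>2 * q)"
    using assms p
    by (simp add: nn_integral_count_space_finite short_cycles_def cycle_prob_def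
        flip: ennreal_plus) (simp add: algebra_simps)
  also have "(\<integral>\<^sup>+ c. ?f c \<partial>count_space (fork_cycle ` {v. dyck v}))
      = (\<integral>\<^sup>+ v. ?f (fork_cycle v) \<partial>count_space {v. dyck v})"
    by (intro nn_integral_bij_count_space[symmetric] inj_on_imp_bij_betw inj_onI)
       (simp add: fork_cycle_def)
  also have "\<dots> = (\<integral>\<^sup>+ v. ennreal (q\<^sup>2 * p) * ennreal ((p * q) ^ (length v div 2))
      \<partial>count_space {v. dyck v})"
    using p q by (intro nn_integral_cong) (simp add: cycle_prob_fork_cycle ennreal_mult)
  also have "\<dots> = ennreal (q\<^sup>2 * p) * ennreal (1 / p)"
    by (simp add: nn_integral_cmult nn_integral_dyck[OF q qp pq])
  also have "ennreal (p + p * q\<^sup>2 + p\<^sup>2 * q) + ennreal (q\<^sup>2 * p) * ennreal (1 / p) = ennreal 1"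
  proof -
    have "p + p * q\<^sup>2 + p\<^sup>2 * q + q\<^sup>2 * p * (1 / p) = p + q * (p * (p + q) + q)"
      using p by (simp add: field_simps power2_eq_square)
    also have "\<dots> = 1" using pq by simp
    finally have "p + p * q\<^sup>2 + p\<^sup>2 * q + q\<^sup>2 * p * (1 / p) = 1" .
    then show ?thesis using p q by (simp flip: ennreal_plus ennreal_mult)
  qed
  finally show ?thesis by simp
qed

lemma pmf_cycle_pmf:
  fixes p q \<gamma> :: real
  assumes "0 < q" "q < p" "p + q = 1" "0 \<le> \<gamma>" "\<gamma> \<le> 1"
  shows "pmf (cycle_pmf p q \<gamma>) c = cycle_prob p q \<gamma> c"
  unfolding cycle_pmf_def
  using cycle_prob_nonneg[OF assms(1,2,4,5)] nn_integral_cycle_prob[OF assms]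
  by (intro pmf_embed_pmf) auto

lemma set_pmf_cycle_pmf:
  fixes p q \<gamma> :: real
  assumes "0 < q" "q < p" "p + q = 1" "0 \<le> \<gamma>" "\<gamma> \<le> 1"
  shows "set_pmf (cycle_pmf p q \<gamma>) \<subseteq> cycle_support"
proof
  fix c assume "c \<in> set_pmf (cycle_pmf p q \<gamma>)"
  then have "cycle_prob p q \<gamma> c \<noteq> 0" using pmf_cycle_pmf[OF assms] by (simp add: set_pmf_iff)
  then show "c \<in> cycle_support" using cycle_prob_outside_support by blast
qed

lemma measure_cycle_pmf:
  fixes p q \<gamma> :: real
  assumes "0 < q" "q < p" "p + q = 1" "0 \<le> \<gamma>" "\<gamma> \<le> 1" and "finite X"
  shows "measure_pmf.prob (cycle_pmf p q \<gamma>) X = (\<Sum>c\<in>X. cycle_prob p q \<gamma> c)"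
  using assms by (simp add: measure_measure_pmf_finite pmf_cycle_pmf)

section \<open>The honest uncles of the first cycle\<close>

lemma rel_height_eq_count_list: "rel_height c j = count_list (take (Suc j) (fst c)) (fst c ! j)"
  by (simp add: rel_height_def length_filter_eq_count_list)

lemma rel_height_pos: "j < length (fst c) \<Longrightarrow> 0 < rel_height c j"
  by (simp add: rel_height_eq_count_list take_Suc_conv_app_nth)

lemma height_first_cycle [simp]: "height s (0, j) = rel_height (shd s) j"
  by (simp add: height_def)

lemma height_second_cycle: "height s (Suc 0, j) = advance (shd s) + rel_height (shd (stl s)) j"
  by (simp add: height_def)

lemma sum_advance_less_height:
  assumes "is_block s (k, j)" "i < k"
  shows "(\<Sum>i'\<le>i. advance (s !! i')) < height s (k, j)"
proof -
  have "(\<Sum>i'\<le>i. advance (s !! i')) \<le> (\<Sum>i'<k. advance (s !! i'))"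
    using assms(2) by (intro sum_mono2) auto
  moreover have "0 < rel_height (s !! k) j"
    using assms(1) by (simp add: rel_height_pos is_block_def)
  ultimately show ?thesis by (simp add: height_def)
qed

lemma advance_pos: "official_in c j \<Longrightarrow> j < length (fst c) \<Longrightarrow> 0 < advance c"
  by (auto simp: advance_def card_gt_0_iff)

lemma is_uncle_first_cycle:
  "is_uncle s (0, j) \<longleftrightarrow> j < length (fst (shd s)) \<and> \<not> official_in (shd s) j \<and>
     (case parent_in (shd s) j of None \<Rightarrow> True
        | Some j' \<Rightarrow> j' < length (fst (shd s)) \<and> official_in (shd s) j')"
  by (auto simp: is_uncle_def official_def is_block_def split: option.splits)

lemma not_referred_by_honest_if_lower_referrer:
  assumes "can_refer n1 s n0 u"
    and "\<And>n. can_refer n1 s n u \<Longrightarrow> miner s n = H \<Longrightarrow> height s n0 < height s n"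
  shows "\<not> referred_by_honest n1 s u"
proof
  assume "referred_by_honest n1 s u"
  then obtain n where "can_refer n1 s n u" "miner s n = H" "height s n \<le> height s n0"
    using assms(1) unfolding referred_by_honest_def by blast
  then show False using assms(2) by fastforce
qed

lemma referred_by_honest_if_lowest:
  assumes "can_refer n1 s n0 u" "miner s n0 = H"
    and "\<And>n. can_refer n1 s n u \<Longrightarrow> height s n0 \<le> height s n"
  shows "referred_by_honest n1 s u"
  using assms unfolding referred_by_honest_def by blast

lemma Uh_eq_0:
  assumes "\<And>j. is_uncle s (0, j) \<Longrightarrow> \<not> referred_by_honest n1 s (0, j)"
  shows "Uh n1 s = 0"
proof -
  have "{j. is_uncle s (0, j) \<and> referred_by_honest n1 s (0, j)} = {}"
    using assms by blast
  then show ?thesis unfolding Uh_def by (simp only: card.empty)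
qed

lemma Uh_eq_if_unique_uncle:
  assumes "\<And>j. is_uncle s (0, j) \<longleftrightarrow> j = a"
  shows "Uh n1 s = (if referred_by_honest n1 s (0, a) then 1 else 0)"
proof -
  have "{j. is_uncle s (0, j) \<and> referred_by_honest n1 s (0, j)} =
      (if referred_by_honest n1 s (0, a) then {a} else {})"
    using assms by auto
  then show ?thesis by (simp add: Uh_def)
qed

lemma advance_SHS: "advance ([S, H, S], b) = 2"
proof -
  have "{j. j < length (fst ([S, H, S], b)) \<and> official_in ([S, H, S], b) j} = {0, 2}"
    by (auto simp: official_in_def numeral_3_eq_3 less_Suc_eq)
  then show ?thesis by (simp add: advance_def)
qed

lemma Uh_H: "shd s = ([H], False) \<Longrightarrow> Uh n1 s = 0"
  by (rule Uh_eq_0) (simp add: is_uncle_first_cycle official_in_def)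

lemma Uh_SHS:
  assumes s0: "shd s = ([S, H, S], False)" and "1 \<le> n1"
  shows "Uh n1 s = 0"
proof (rule Uh_eq_0)
  fix j assume "is_uncle s (0, j)"
  then have j: "j = 1" using s0
    by (auto simp: is_uncle_first_cycle official_in_def numeral_3_eq_3 less_Suc_eq)
  have "can_refer n1 s (0, 2) (0, 1)"
    using \<open>is_uncle s (0, j)\<close> j s0 \<open>1 \<le> n1\<close>
    by (simp add: can_refer_def official_def is_block_def official_in_def mined_before_def rel_height_def)
  then show "\<not> referred_by_honest n1 s (0, j)"
    unfolding j
  proof (rule not_referred_by_honest_if_lower_referrer)
    fix n assume n: "can_refer n1 s n (0, 1)" "miner s n = H"
    obtain k i where ki: "n = (k, i)" by fastforce
    have "k \<noteq> 0"
    proof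
      assume "k = 0"
      then have "i = 0 \<or> i = 2" using n(1) s0 ki
        by (auto simp: can_refer_def official_def is_block_def official_in_def numeral_3_eq_3 less_Suc_eq)
      then show False using n(2) s0 ki \<open>k = 0\<close> by (auto simp: miner_def)
    qed
    then have "advance (shd s) < height s n"
      using sum_advance_less_height[of s k i 0] n(1) ki by (simp add: can_refer_def official_def)
    then show "height s (0, 2) < height s n"
      using s0 by (simp add: advance_SHS rel_height_def)
  qed
qed

lemma Uh_SHH:
  assumes s0: "shd s = ([S, H, H], b)" and "1 \<le> n1"
  shows "Uh n1 s = 1"
proof -
  define a where "a = (if b then 1 else 0 :: nat)"
  have uncle: "is_uncle s (0, j) \<longleftrightarrow> j = a" for j
    using s0 by (auto simp: is_uncle_first_cycle official_in_def parent_in_def rel_height_def a_def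
        numeral_3_eq_3 less_Suc_eq)
  have "can_refer n1 s (0, 2) (0, a)"
    using uncle s0 \<open>1 \<le> n1\<close>
    by (simp add: can_refer_def official_def is_block_def official_in_def mined_before_def
        rel_height_def a_def)
  then have "referred_by_honest n1 s (0, a)"
  proof (rule referred_by_honest_if_lowest)
    show "miner s (0, 2) = H" using s0 by (simp add: miner_def)
  next
    fix n assume "can_refer n1 s n (0, a)"
    then have "height s (0, a) < height s n" by (simp add: can_refer_def)
    then show "height s (0, 2) \<le> height s n"
      using s0 by (cases b) (simp_all add: rel_height_def a_def)
  qed
  then show ?thesis by (simp add: Uh_eq_if_unique_uncle[OF uncle])
qed

text \<open>The support cycles whose first official block is honest; in \<open>([S, H, H], False)\<close> the
  second honest block is built on the first one.\<close>
definition honest_first_cycles :: "cycle set" where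
  "honest_first_cycles = {([H], False), ([S, H, H], False)}"

lemma cycle_support_cases:
  assumes "c \<in> cycle_support"
  obtains "c = ([H], False)" | "c = ([S, H, S], False)" | "c = ([S, H, H], True)"
    | "c = ([S, H, H], False)" | v where "dyck v" "c = fork_cycle v"
  using assms by (auto simp: cycle_support_def short_cycles_def)

lemma first_official_block:
  assumes "c \<in> cycle_support"
  obtains j where "j < length (fst c)" "official_in c j" "rel_height c j = 1"
    "fst c ! j = H \<longleftrightarrow> c \<in> honest_first_cycles"
  using assms
proof (cases rule: cycle_support_cases)
  case 4
  then show thesis
    by (intro that[of 1]) (simp_all add: official_in_def rel_height_def honest_first_cycles_def)
next
  case (5 v)
  then show thesis
    by (intro that[of 0]) (simp_all add: official_in_def rel_height_def honest_first_cycles_def fork_cycle_def)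
qed (intro that[of 0], simp_all add: official_in_def rel_height_def honest_first_cycles_def)+

lemma official_honest_rel_height_1:
  assumes "c \<in> cycle_support" "j < length (fst c)" "official_in c j" "fst c ! j = H"
    "rel_height c j = 1"
  shows "c \<in> honest_first_cycles"
  using assms(1)
proof (cases rule: cycle_support_cases)
  case (5 v)
  then show ?thesis using assms(3,4) by (simp add: official_in_def fork_cycle_def)
qed (use assms(2-) in \<open>auto simp: honest_first_cycles_def official_in_def rel_height_def
    numeral_3_eq_3 less_Suc_eq\<close>)

lemma split_first_honest:
  assumes "H \<in> set w"
  obtains a r where "S # S # w = replicate a S @ H # r" "2 \<le> a"
proof -
  obtain ys r where "w = ys @ H # r" "H \<notin> set ys"
    using split_list_first[OF assms] by blast
  moreover have "replicate (length ys) S = ys"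
    using \<open>H \<notin> set ys\<close> letter_neq_S_iff by (metis replicate_length_same)
  ultimately show thesis
    using that[of "Suc (Suc (length ys))" r] by simp
qed

lemma replicate_S_append_H_inj:
  "replicate a S @ H # r = replicate b S @ H # r' \<Longrightarrow> a = b \<and> r = r'"
proof (induction a arbitrary: b)
  case 0
  then show ?case by (cases b) auto
next
  case (Suc a)
  then show ?case by (cases b) auto
qed

context
  fixes s :: "cycle stream" and a :: nat and r :: "letter list"
  assumes first_cycle: "fst (shd s) = replicate a S @ H # r" and two_le_a: "2 \<le> a"
begin

lemma first_cycle_SS: "fst (shd s) = S # S # replicate (a - 2) S @ H # r"
proof -
  obtain a' where "a = Suc (Suc a')" using two_le_a by (metis add_2_eq_Suc le_Suc_ex)
  then show ?thesis using first_cycle by simp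
qed

lemma official_in_first_cycle: "official_in (shd s) j \<longleftrightarrow> fst (shd s) ! j = S"
  by (simp add: official_in_def first_cycle_SS)

lemma nth_first_cycle_after: "fst (shd s) ! Suc (a + i) = r ! i"
  using first_cycle by (simp add: nth_append)

lemma rel_height_first_cycle_after:
  "rel_height (shd s) (Suc (a + i)) =
     (if r ! i = S then a else 1) + count_list (take (Suc i) r) (r ! i)"
  using first_cycle by (simp add: rel_height_eq_count_list nth_append)

lemma advance_first_cycle: "advance (shd s) = a + count_list r S"
proof -
  have "advance (shd s) = length (filter (\<lambda>x. x = S) (fst (shd s)))"
    by (simp add: advance_def official_in_first_cycle length_filter_conv_card)
  then show ?thesis using first_cycle by (simp add: length_filter_eq_count_list)
qed

lemma rel_height_attacker_block_after:
  assumes "j < length (fst (shd s))" "fst (shd s) ! j = S" "a < j"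
  shows "a < rel_height (shd s) j"
proof -
  obtain i where i: "j = Suc (a + i)" using less_iff_Suc_add[THEN iffD1, OF assms(3)] by blast
  then have "r ! i = S" "i < length r"
    using assms(1,2) first_cycle nth_first_cycle_after[of i] by auto
  moreover from this have "0 < count_list (take (Suc i) r) S"
    by (simp add: take_Suc_conv_app_nth)
  ultimately show ?thesis
    using i rel_height_first_cycle_after[of i] by simp
qed

lemma rel_height_first_honest: "rel_height (shd s) a = 1"
  using first_cycle by (simp add: rel_height_eq_count_list nth_append)

lemma is_uncle_first_cycle_iff: "is_uncle s (0, j) \<longleftrightarrow> j = a"
proof
  assume "j = a"
  with rel_height_first_honest show "is_uncle s (0, j)"
    using first_cycle by (simp add: is_uncle_first_cycle official_in_first_cycle parent_in_def nth_append)
next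
  assume uncle: "is_uncle s (0, j)"
  show "j = a"
  proof (rule ccontr)
    assume "j \<noteq> a"
    have j: "j < length (fst (shd s))" "fst (shd s) ! j = H"
      using uncle by (auto simp: is_uncle_first_cycle official_in_first_cycle)
    then have "a < j" using \<open>j \<noteq> a\<close> first_cycle by (cases "j < a") (auto simp: nth_append)
    then obtain i where i: "j = Suc (a + i)" using less_iff_Suc_add by blast
    then have "r ! i = H" "i < length r" using j nth_first_cycle_after first_cycle by auto
    then have "rel_height (shd s) j \<noteq> 1"
      using i rel_height_first_cycle_after[of i] by (simp add: take_Suc_conv_app_nth)
    moreover have "fst (shd s) \<noteq> [S, H, H]" by (simp add: first_cycle_SS)
    ultimately have parent: "parent_in (shd s) j = Some (GREATEST j'. j' < j \<and> fst (shd s) ! j' = H)"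
      using j by (simp add: parent_in_def)
    have "fst (shd s) ! a = H" using first_cycle by (simp add: nth_append)
    with \<open>a < j\<close> have "(GREATEST j'. j' < j \<and> fst (shd s) ! j' = H) < j \<and>
        fst (shd s) ! (GREATEST j'. j' < j \<and> fst (shd s) ! j' = H) = H"
      by (intro GreatestI_ex_nat[where P = "\<lambda>j'. j' < j \<and> fst (shd s) ! j' = H" and b = j]) auto
    then show False
      using uncle parent by (simp add: is_uncle_first_cycle official_in_first_cycle)
  qed
qed

lemma referrer_height:
  assumes "can_refer n1 s n (0, a)"
  shows "a < height s n" and "miner s n = H \<Longrightarrow> a + count_list r S < height s n"
proof -
  obtain k i where n: "n = (k, i)" by fastforce
  show "miner s n = H \<Longrightarrow> a + count_list r S < height s n"
  proof (cases k)
    case 0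
    then show "miner s n = H \<Longrightarrow> ?thesis"
      using assms n by (simp add: can_refer_def official_def official_in_first_cycle miner_def)
  next
    case (Suc k')
    then show ?thesis
      using assms n sum_advance_less_height[of s k i 0]
      by (simp add: can_refer_def official_def advance_first_cycle)
  qed
  show "a < height s n"
  proof (cases k)
    case 0
    then have "i < length (fst (shd s))" "fst (shd s) ! i = S" "a < i"
      using assms n by (auto simp: can_refer_def official_def is_block_def official_in_first_cycle mined_before_def)
    then show ?thesis using n 0 by (simp add: rel_height_attacker_block_after)
  next
    case (Suc k')
    then show ?thesis
      using assms n sum_advance_less_height[of s k i 0]
      by (simp add: can_refer_def official_def advance_first_cycle)
  qed
qed

lemma no_referrer_if_far:
  assumes "n1 < a"
  shows "\<not> can_refer n1 s n (0, a)"
  using referrer_height(1)[of n1 n] assms by (auto simp: can_refer_def rel_height_first_honest)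

text \<open>An attacker block mined after the uncle sits at height \<open>a + 1\<close>, below every official
  honest block, so it refers the uncle first.\<close>
lemma not_referred_by_honest_if_attacker_block_after:
  assumes "S \<in> set r"
  shows "\<not> referred_by_honest n1 s (0, a)"
proof (cases "a \<le> n1")
  case True
  obtain ys zs where r: "r = ys @ S # zs" "S \<notin> set ys"
    using split_list_first[OF assms] by blast
  define j0 where "j0 = Suc (a + length ys)"
  have "rel_height (shd s) j0 = Suc a"
    using rel_height_first_cycle_after[of "length ys"] r by (simp add: j0_def)
  moreover have "fst (shd s) ! j0 = S" "j0 < length (fst (shd s))"
    using nth_first_cycle_after[of "length ys"] r first_cycle by (simp_all add: j0_def)
  ultimately have refer: "can_refer n1 s (0, j0) (0, a)"
    using True two_le_a is_uncle_first_cycle_iff[of a]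
    by (simp add: can_refer_def official_def is_block_def official_in_first_cycle
        mined_before_def j0_def rel_height_first_honest)
  have "0 < count_list r S" by (metis assms count_list_0_iff gr0I)
  then show ?thesis
    using referrer_height(2) \<open>rel_height (shd s) j0 = Suc a\<close>
    by (intro not_referred_by_honest_if_lower_referrer[OF refer]) fastforce
next
  case False
  then show ?thesis using no_referrer_if_far by (simp add: referred_by_honest_def)
qed

lemma honest_referrer_height_if_no_attacker_block_after:
  assumes "S \<notin> set r" and second: "shd (stl s) \<in> cycle_support"
    and "shd (stl s) \<notin> honest_first_cycles"
    and n: "can_refer n1 s n (0, a)" "miner s n = H"
  shows "Suc a < height s n"
proof -
  have advance: "advance (shd s) = a"
    using advance_first_cycle assms(1) by simp
  obtain k i where ki: "n = (k, i)" by fastforce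
  then have block: "is_block s (k, i)" "official_in (s !! k) i"
    using n(1) by (simp_all add: can_refer_def official_def)
  consider "k = 0" | "k = 1" | "2 \<le> k" by linarith
  then show ?thesis
  proof cases
    case 1
    then show ?thesis using n(2) ki block by (simp add: official_in_first_cycle miner_def)
  next
    case 2
    then have "rel_height (shd (stl s)) i \<noteq> 1"
      using official_honest_rel_height_1[OF second] assms(3) n(2) ki block
      by (auto simp: is_block_def miner_def)
    moreover have "0 < rel_height (shd (stl s)) i"
      using block 2 by (simp add: is_block_def rel_height_pos)
    ultimately show ?thesis
      using ki 2 advance by (simp add: height_second_cycle)
  next
    case 3
    obtain j1 where "j1 < length (fst (shd (stl s)))" "official_in (shd (stl s)) j1"
      using first_official_block[OF second] by blast
    then have "0 < advance (shd (stl s))" by (intro advance_pos)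
    then show ?thesis
      using sum_advance_less_height[OF block(1), of 1] 3 ki advance by simp
  qed
qed

lemma referred_by_honest_iff_if_no_attacker_block_after:
  assumes "S \<notin> set r" and second: "shd (stl s) \<in> cycle_support"
  shows "referred_by_honest n1 s (0, a) \<longleftrightarrow> a \<le> n1 \<and> shd (stl s) \<in> honest_first_cycles"
proof (cases "a \<le> n1")
  case False
  then show ?thesis using no_referrer_if_far by (simp add: referred_by_honest_def)
next
  case True
  obtain j1 where j1: "j1 < length (fst (shd (stl s)))" "official_in (shd (stl s)) j1"
    "rel_height (shd (stl s)) j1 = 1" "fst (shd (stl s)) ! j1 = H \<longleftrightarrow> shd (stl s) \<in> honest_first_cycles"
    using first_official_block[OF second] by blast
  have height_j1: "height s (1, j1) = Suc a"
    using advance_first_cycle assms(1) j1(3) by (simp add: height_second_cycle)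
  then have refer: "can_refer n1 s (1, j1) (0, a)"
    using True two_le_a j1 is_uncle_first_cycle_iff[of a]
    by (simp add: can_refer_def official_def is_block_def mined_before_def rel_height_first_honest)
  show ?thesis
  proof (cases "shd (stl s) \<in> honest_first_cycles")
    case True
    have "referred_by_honest n1 s (0, a)"
      using refer j1(4) True height_j1 referrer_height(1)
      by (intro referred_by_honest_if_lowest[OF refer]) (auto simp: miner_def Suc_le_eq)
    then show ?thesis using True \<open>a \<le> n1\<close> by simp
  next
    case False
    have "\<not> referred_by_honest n1 s (0, a)"
      using honest_referrer_height_if_no_attacker_block_after[OF assms False] height_j1
      by (intro not_referred_by_honest_if_lower_referrer[OF refer]) simp
    then show ?thesis using False by simp
  qed
qed

end

text \<open>The fork cycle \<open>S\<^bsup>k+2\<^esup> H\<^bsup>k+1\<^esup>\<close>: all attacker blocks precede the honest uncle, so only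
  the next cycle can refer it, at distance \<open>k + 2\<close>.\<close>
definition front_loaded_fork :: "nat \<Rightarrow> cycle" where
  "front_loaded_fork k = (replicate (k + 2) S @ H # replicate k H, False)"

lemma front_loaded_fork_eq_fork_cycle: "front_loaded_fork k = fork_cycle (replicate k S @ replicate k H)"
  by (simp add: front_loaded_fork_def fork_cycle_def replicate_append_same)

lemma inj_front_loaded_fork: "inj front_loaded_fork"
proof (rule injI)
  fix k k' assume "front_loaded_fork k = front_loaded_fork k'"
  then have "length (fst (front_loaded_fork k)) = length (fst (front_loaded_fork k'))" by simp
  then show "k = k'" by (simp add: front_loaded_fork_def)
qed

lemma cycle_prob_front_loaded_fork: "cycle_prob p q \<gamma> (front_loaded_fork k) = q\<^sup>2 * p * (p * q) ^ k"
  by (simp add: front_loaded_fork_eq_fork_cycle cycle_prob_fork_cycle dyck_replicate)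

lemma Uh_fork_cycle:
  assumes v: "dyck v" and first: "shd s = fork_cycle v" and second: "shd (stl s) \<in> cycle_support"
  shows "Uh n1 s = (if shd s \<in> front_loaded_fork ` {..<n1 - 1} \<and> shd (stl s) \<in> honest_first_cycles
    then 1 else 0)"
proof -
  obtain a r where ar: "S # S # v @ [H] = replicate a S @ H # r" and a: "2 \<le> a"
    using split_first_honest[of "v @ [H]"] by auto
  have first_cycle: "fst (shd s) = replicate a S @ H # r"
    using first ar by (simp add: fork_cycle_def)
  have Uh: "Uh n1 s = (if referred_by_honest n1 s (0, a) then 1 else 0)"
    by (rule Uh_eq_if_unique_uncle) (rule is_uncle_first_cycle_iff[OF first_cycle a])
  show ?thesis
  proof (cases "S \<in> set r")
    case True
    have "shd s \<noteq> front_loaded_fork k" for k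
    proof
      assume "shd s = front_loaded_fork k"
      then have "fst (shd s) = replicate (k + 2) S @ H # replicate k H"
        by (simp add: front_loaded_fork_def)
      then have "r = replicate k H"
        using replicate_S_append_H_inj first_cycle by metis
      with True show False by simp
    qed
    then show ?thesis
      using Uh not_referred_by_honest_if_attacker_block_after[OF first_cycle a True] by auto
  next
    case False
    then have "replicate (length r) H = r"
      by (metis letter_neq_S_iff replicate_length_same)
    moreover have "count_list v S = count_list v H"
      using v by (simp add: dyck_iff_count_list)
    then have "length r = a - 2"
      using arg_cong[OF ar, of "\<lambda>w. count_list w S"] arg_cong[OF ar, of "\<lambda>w. count_list w H"] False
        length_eq_count_list_S_H[of r]
      by (simp add: count_list_0_iff)
    moreover have "a - 2 + 2 = a" using a by simp
    ultimately have "front_loaded_fork (a - 2) = (fst (shd s), snd (shd s))"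
      using first first_cycle unfolding front_loaded_fork_def by (simp add: fork_cycle_def)
    then have "shd s = front_loaded_fork (a - 2)" by simp
    then have "shd s \<in> front_loaded_fork ` {..<n1 - 1} \<longleftrightarrow> a \<le> n1"
      using a inj_front_loaded_fork by (auto simp: inj_eq)
    then show ?thesis
      using Uh referred_by_honest_iff_if_no_attacker_block_after[OF first_cycle a False second]
      by simp
  qed
qed

definition SHH_cycles :: "cycle set" where
  "SHH_cycles = {([S, H, H], True), ([S, H, H], False)}"

lemma Uh_eq_indicators:
  assumes first: "shd s \<in> cycle_support" and second: "shd (stl s) \<in> cycle_support" and "1 \<le> n1"
  shows "real (Uh n1 s) = indicator SHH_cycles (shd s) +
    indicator (front_loaded_fork ` {..<n1 - 1}) (shd s) * indicator honest_first_cycles (shd (stl s))"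
proof -
  have not_front_loaded: "([H], False) \<notin> front_loaded_fork ` X" "(S # H # w, b) \<notin> front_loaded_fork ` X"
    for X w b by (auto simp: front_loaded_fork_def)
  from first show ?thesis
  proof (cases rule: cycle_support_cases)
    case (5 v)
    have "shd s \<notin> SHH_cycles" using 5 by (auto simp: SHH_cycles_def fork_cycle_def)
    then show ?thesis using Uh_fork_cycle[OF 5 second] by (simp add: indicator_def)
  qed (use not_front_loaded Uh_H Uh_SHS Uh_SHH \<open>1 \<le> n1\<close> in \<open>auto simp: SHH_cycles_def\<close>)
qed

lemma AE_Uh_eq_indicators:
  fixes p q \<gamma> :: real
  assumes "0 < q" "q < p" "p + q = 1" "0 \<le> \<gamma>" "\<gamma> \<le> 1" "1 \<le> n1"
  shows "AE s in stream_space (measure_pmf (cycle_pmf p q \<gamma>)). real (Uh n1 s) =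
    indicator SHH_cycles (shd s) +
    indicator (front_loaded_fork ` {..<n1 - 1}) (shd s) * indicator honest_first_cycles (shd (stl s))"
proof -
  have "AE s in stream_space (measure_pmf (cycle_pmf p q \<gamma>)). stream_all (\<lambda>c. c \<in> cycle_support) s"
    using set_pmf_cycle_pmf[OF assms(1-5)]
    by (intro prob_space.AE_stream_all[OF prob_space_measure_pmf]) (auto simp: AE_measure_pmf_iff)
  then show ?thesis
    by (rule eventually_mono) (metis Uh_eq_indicators assms(6) snth.simps stream_all_def)
qed

section \<open>Measurability\<close>

instance letter :: countable
  by countable_datatype

lemma measurable_stake_pmf:
  "stake K \<in> stream_space (measure_pmf P) \<rightarrow>\<^sub>M count_space (UNIV :: 'a :: countable list set)"
proof -
  have "sets (stream_space (measure_pmf P)) = sets (stream_space (count_space (UNIV :: 'a set)))"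
    by (rule sets_stream_space_cong) simp
  then show ?thesis using measurable_stake by (simp add: measurable_cong_sets)
qed

lemma pred_stream_space_if_stake_determined:
  fixes Q :: "'a :: countable stream \<Rightarrow> bool"
  assumes "\<And>s t. stake K s = stake K t \<Longrightarrow> Q s = Q t"
  shows "Measurable.pred (stream_space (measure_pmf P)) Q"
proof -
  have "Q = (\<lambda>s. Q (stake K s @- sconst undefined))"
    by (rule ext, rule assms) (simp add: stake_shift)
  also have "Measurable.pred (stream_space (measure_pmf P)) \<dots>"
    by (rule measurable_compose[OF measurable_stake_pmf]) simp
  finally show ?thesis .
qed

lemma block_notions_stake_determined:
  assumes "stake K s = stake K t" "fst n < K"
  shows "official s n = official t n" "miner s n = miner t n" "height s n = height t n"
    "is_uncle s n = is_uncle t n"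
proof -
  have cycles: "s !! k = t !! k" if "k < K" for k
    using stake_nth[OF that, of s] stake_nth[OF that, of t] assms(1) by simp
  then have "s !! fst n = t !! fst n" using assms(2) by blast
  then show "official s n = official t n" "miner s n = miner t n" "is_uncle s n = is_uncle t n"
    by (simp_all add: official_def miner_def is_block_def is_uncle_def split: option.splits)
  have "(\<Sum>k<fst n. advance (s !! k)) = (\<Sum>k<fst n. advance (t !! k))"
    using assms(2) by (intro sum.cong refl arg_cong[where f = advance] cycles) auto
  with \<open>s !! fst n = t !! fst n\<close> show "height s n = height t n" by (simp add: height_def)
qed

lemma pred_can_refer:
  "Measurable.pred (stream_space (measure_pmf P)) (\<lambda>s. can_refer n1 s n u)"
proof (rule pred_stream_space_if_stake_determined[where K = "Suc (fst n + fst u)"])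
  fix s t :: "cycle stream" assume "stake (Suc (fst n + fst u)) s = stake (Suc (fst n + fst u)) t"
  from block_notions_stake_determined[OF this]
  show "can_refer n1 s n u = can_refer n1 t n u" by (simp add: can_refer_def)
qed

lemma pred_miner:
  "Measurable.pred (stream_space (measure_pmf P)) (\<lambda>s. miner s n = H)"
proof (rule pred_stream_space_if_stake_determined[where K = "Suc (fst n)"])
  fix s t :: "cycle stream" assume "stake (Suc (fst n)) s = stake (Suc (fst n)) t"
  from block_notions_stake_determined[OF this]
  show "(miner s n = H) = (miner t n = H)" by simp
qed

lemma pred_height_le:
  "Measurable.pred (stream_space (measure_pmf P)) (\<lambda>s. height s n \<le> height s n')"
proof (rule pred_stream_space_if_stake_determined[where K = "Suc (fst n + fst n')"])
  fix s t :: "cycle stream" assume "stake (Suc (fst n + fst n')) s = stake (Suc (fst n + fst n')) t"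
  from block_notions_stake_determined[OF this]
  show "(height s n \<le> height s n') = (height t n \<le> height t n')" by simp
qed

lemma pred_is_uncle:
  "Measurable.pred (stream_space (measure_pmf P)) (\<lambda>s. is_uncle s u)"
proof (rule pred_stream_space_if_stake_determined[where K = "Suc (fst u)"])
  fix s t :: "cycle stream" assume "stake (Suc (fst u)) s = stake (Suc (fst u)) t"
  from block_notions_stake_determined[OF this]
  show "is_uncle s u = is_uncle t u" by simp
qed

lemma pred_referred_by_honest:
  "Measurable.pred (stream_space (measure_pmf P)) (\<lambda>s. referred_by_honest n1 s u)"
  unfolding referred_by_honest_def
  by (intro pred_intros_countable pred_intros_logic(3,4) pred_can_refer pred_miner pred_height_le)

lemma measurable_Uh [measurable]:
  "(\<lambda>s. real (Uh n1 s)) \<in> borel_measurable (stream_space (measure_pmf P))"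
proof -
  have "real (Uh n1 s) = (\<Sum>j<length (fst (shd s)).
      if is_uncle s (0, j) \<and> referred_by_honest n1 s (0, j) then 1 else 0)" for s
  proof -
    have "{j. is_uncle s (0, j) \<and> referred_by_honest n1 s (0, j)} =
        {j \<in> {..<length (fst (shd s))}. is_uncle s (0, j) \<and> referred_by_honest n1 s (0, j)}"
      by (auto simp: is_uncle_first_cycle)
    then show ?thesis by (simp add: Uh_def sum.inter_filter[symmetric])
  qed
  moreover have "(\<lambda>s. \<Sum>j<length (fst (shd s)).
      if is_uncle s (0, j) \<and> referred_by_honest n1 s (0, j) then 1 else 0 :: real)
      \<in> borel_measurable (stream_space (measure_pmf P))"
  proof (rule measurable_compose_countable[where g = "\<lambda>s. length (fst (shd s))"])
    show "(\<lambda>s. length (fst (shd s))) \<in> stream_space (measure_pmf P) \<rightarrow>\<^sub>M count_space UNIV"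
      by (rule measurable_compose[OF measurable_shd]) simp
  qed (intro borel_measurable_sum measurable_If borel_measurable_const predE pred_intros_logic(3)
      pred_is_uncle pred_referred_by_honest)
  ultimately show ?thesis by simp
qed

section \<open>The expectation\<close>

lemma (in prob_space) integral_stream_space_indicators:
  assumes [measurable]: "A \<in> sets M" "B \<in> sets M" "C \<in> sets M"
  shows "(\<integral>s. indicator A (shd s) + indicator B (shd s) * indicator C (shd (stl s)) \<partial>stream_space M)
    = measure M A + measure M B * measure M C"
proof -
  interpret S: prob_space "stream_space M"
    by (rule prob_space_stream_space)
  have second: "(\<integral>\<^sup>+ X. indicator C (shd X) \<partial>stream_space M) = emeasure M C"
    by (subst nn_integral_stream_space) (simp_all add: S.emeasure_space_1)
  have "(\<integral>\<^sup>+ s. ennreal (indicator A (shd s) + indicator B (shd s) * indicator C (shd (stl s)))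
      \<partial>stream_space M)
    = (\<integral>\<^sup>+ x. (\<integral>\<^sup>+ X. indicator A x + indicator B x * indicator C (shd X) \<partial>stream_space M) \<partial>M)"
    by (subst nn_integral_stream_space) (simp_all add: ennreal_mult ennreal_plus ennreal_indicator)
  also have "\<dots> = (\<integral>\<^sup>+ x. indicator A x + indicator B x * emeasure M C \<partial>M)"
    by (intro nn_integral_cong)
       (simp add: nn_integral_add nn_integral_cmult S.emeasure_space_1 second)
  also have "\<dots> = emeasure M A + emeasure M B * emeasure M C"
    by (simp add: nn_integral_add nn_integral_multc)
  finally show ?thesis
    by (subst integral_eq_nn_integral) (simp_all add: emeasure_eq_measure flip: ennreal_plus ennreal_mult)
qed

context
  fixes p q \<gamma> :: real
  assumes q: "0 < q" and qp: "q < p" and pq: "p + q = 1" and \<gamma>: "0 \<le> \<gamma>" "\<gamma> \<le> 1"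
begin

lemma prob_SHH_cycles: "measure_pmf.prob (cycle_pmf p q \<gamma>) SHH_cycles = p\<^sup>2 * q"
  using q qp pq \<gamma> by (simp add: measure_cycle_pmf SHH_cycles_def cycle_prob_def algebra_simps)

lemma prob_honest_first_cycles:
  "measure_pmf.prob (cycle_pmf p q \<gamma>) honest_first_cycles = p + (1 - \<gamma>) * p\<^sup>2 * q"
  using q qp pq \<gamma> by (simp add: measure_cycle_pmf honest_first_cycles_def cycle_prob_def)

lemma prob_front_loaded_forks:
  "measure_pmf.prob (cycle_pmf p q \<gamma>) (front_loaded_fork ` {..<m}) =
    p * q\<^sup>2 * ((1 - (p * q) ^ m) / (1 - p * q))"
proof -
  have "p * q < 1"
    using q qp pq mult_strict_mono[of p 1 q 1] by simp
  have "measure_pmf.prob (cycle_pmf p q \<gamma>) (front_loaded_fork ` {..<m})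
      = (\<Sum>k<m. q\<^sup>2 * p * (p * q) ^ k)"
    using q qp pq \<gamma> inj_front_loaded_fork
    by (simp add: measure_cycle_pmf sum.reindex inj_on_subset cycle_prob_front_loaded_fork)
  also have "\<dots> = p * q\<^sup>2 * (\<Sum>k<m. (p * q) ^ k)"
    by (simp add: sum_distrib_left mult_ac)
  also have "(\<Sum>k<m. (p * q) ^ k) = (1 - (p * q) ^ m) / (1 - p * q)"
    using \<open>p * q < 1\<close> by (simp add: sum_gp_strict)
  finally show ?thesis .
qed

end

theorem proposition14:
  fixes p q \<gamma> :: real and n1 :: nat
  assumes "0 < q" "q < p" "p + q = 1" "0 \<le> \<gamma>" "\<gamma> \<le> 1" "2 \<le> n1"
  shows "integral\<^sup>L (stream_space (measure_pmf (cycle_pmf p q \<gamma>))) (\<lambda>s. real (Uh n1 s))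
     = p^2 * q + (p + (1 - \<gamma>) * p^2 * q) * p * q^2 * ((1 - (p*q)^(n1 - 1)) / (1 - p*q))"
proof -
  let ?M = "measure_pmf (cycle_pmf p q \<gamma>)"
  have "integral\<^sup>L (stream_space ?M) (\<lambda>s. real (Uh n1 s)) =
      (\<integral>s. indicator SHH_cycles (shd s) +
        indicator (front_loaded_fork ` {..<n1 - 1}) (shd s) * indicator honest_first_cycles (shd (stl s))
        \<partial>stream_space ?M)"
    using assms by (intro integral_cong_AE AE_Uh_eq_indicators) simp_all
  also have "\<dots> = measure ?M SHH_cycles +
      measure ?M (front_loaded_fork ` {..<n1 - 1}) * measure ?M honest_first_cycles"
    by (intro prob_space.integral_stream_space_indicators prob_space_measure_pmf) simp_all
  also have "\<dots> = p^2 * q + (p + (1 - \<gamma>) * p^2 * q) * p * q^2 * ((1 - (p*q)^(n1 - 1)) / (1 - p*q))"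
    using assms(1-5)
    by (simp add: prob_SHH_cycles prob_honest_first_cycles prob_front_loaded_forks)
  finally show ?thesis .
qed

end
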